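(* Let $n\ge 1$. The path $P_n$ is pseudo-Gorenstein$^{*}$ if and only if $n\equiv 0,2,9,11 \pmod{12}$.
   Context: For a finite simple graph $G$ on vertex set $[N]$, let $S=K[x_1,\dots,x_N]$ ($K$ a field) and $I(G)$ the edge ideal generated by $x_ix_j$, $\{i,j\}\in E(G)$. Let $\alpha(G)$ be the independence number (equal to $\dim S/I(G)$). Write the Hilbert series of $S/I(G)$ uniquely as $(h_0+\dots+h_st^s)/(1-t)^{\alpha(G)}$ with $h_s\ne 0$; the numerator is the $h$-polynomial $h_G(t)$, and $\mathfrak a(G)=s-\alpha(G)$. $G$ is pseudo-Gorenstein$^{*}$ if $h_s=1$ and $\mathfrak a(G)=0$. $P_n$ denotes the path on $n$ vertices. *)

theory Defs
  imports "HOL-Computational_Algebra.Polynomial" "HOL-Computational_Algebra.Formal_Power_Series"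
    "HOL-Computational_Algebra.Polynomial_FPS"
begin

text \<open>A finite simple graph on vertex set [N] = {1..N} is given by N and a
 symmetric irreflexive edge relation E (only pairs inside {1..N} matter).\<close>

definition independent_set :: "nat \<Rightarrow> (nat \<Rightarrow> nat \<Rightarrow> bool) \<Rightarrow> nat set \<Rightarrow> bool" where
  "independent_set N E F \<longleftrightarrow> F \<subseteq> {1..N} \<and> (\<forall>i\<in>F. \<forall>j\<in>F. \<not> E i j)"

definition independence_number :: "nat \<Rightarrow> (nat \<Rightarrow> nat \<Rightarrow> bool) \<Rightarrow> nat" where
  "independence_number N E = Max (card ` {F. independent_set N E F})"

text \<open>Monomials x^m of S = K[x_1..x_N] are exponent vectors m supported in {1..N}.
 The monomials not in the monomial ideal I(G) (i.e. not divisible by any x_i x_j with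
 {i,j} an edge) form a K-basis of S/I(G); the Hilbert function counts those of degree d.\<close>

definition standard_monomials :: "nat \<Rightarrow> (nat \<Rightarrow> nat \<Rightarrow> bool) \<Rightarrow> nat \<Rightarrow> (nat \<Rightarrow> nat) set" where
  "standard_monomials N E d =
     {m. (\<forall>i. i \<notin> {1..N} \<longrightarrow> m i = 0) \<and> sum m {1..N} = d \<and>
         \<not> (\<exists>i\<in>{1..N}. \<exists>j\<in>{1..N}. E i j \<and> m i > 0 \<and> m j > 0)}"

definition hilbert_function :: "nat \<Rightarrow> (nat \<Rightarrow> nat \<Rightarrow> bool) \<Rightarrow> nat \<Rightarrow> nat" where
  "hilbert_function N E d = card (standard_monomials N E d)"

definition hilbert_series :: "nat \<Rightarrow> (nat \<Rightarrow> nat \<Rightarrow> bool) \<Rightarrow> int fps" where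
  "hilbert_series N E = Abs_fps (\<lambda>d. int (hilbert_function N E d))"

definition is_h_polynomial :: "nat \<Rightarrow> (nat \<Rightarrow> nat \<Rightarrow> bool) \<Rightarrow> int poly \<Rightarrow> bool" where
  "is_h_polynomial N E h \<longleftrightarrow>
     fps_of_poly h = hilbert_series N E * (1 - fps_X) ^ independence_number N E"

text \<open>pseudo-Gorenstein*: h_s = 1 and a(G) = s - alpha(G) = 0, where s = deg h.\<close>
definition pseudo_gorenstein_star :: "nat \<Rightarrow> (nat \<Rightarrow> nat \<Rightarrow> bool) \<Rightarrow> bool" where
  "pseudo_gorenstein_star N E \<longleftrightarrow>
     (\<exists>h. is_h_polynomial N E h \<and> lead_coeff h = 1 \<and> degree h = independence_number N E)"

definition path_edge :: "nat \<Rightarrow> nat \<Rightarrow> bool" where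
  "path_edge i j \<longleftrightarrow> j = i + 1 \<or> i = j + 1"

end

(* Splitting the standard monomials of S/I(G) according to whether x_v divides them, and dividing
   by x_v in the second case, gives (1 - t) HS(G) = (1 - t) HS(G - v) + t HS(G - N[v]).  For the
   last vertex of P_n this is (1 - t) HS(P_n) = (1 - t) HS(P_(n-1)) + t HS(P_(n-2)).  Since
   alpha(P_n) = ceil(n/2), multiplying by (1 - t)^alpha(P_n) yields a recurrence for the
   h-polynomials showing deg h_n <= alpha(P_n), and the coefficient c_n of t^alpha(P_n) obeys
   c_(n+2) = (-1)^n c_(n+1) + c_n with c_0 = 1, c_1 = 0.  Hence c_(n+6) = -c_n, and P_n is
   pseudo-Gorenstein* iff c_n = 1 iff n mod 12 is 0, 2, 9 or 11. *)

theory Submission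
  imports Defs
begin

definition std_monomials_on :: "'a set \<Rightarrow> ('a \<Rightarrow> 'a \<Rightarrow> bool) \<Rightarrow> nat \<Rightarrow> ('a \<Rightarrow> nat) set" where
  "std_monomials_on V E d =
     {m. (\<forall>i. i \<notin> V \<longrightarrow> m i = 0) \<and> sum m V = d \<and> (\<forall>i\<in>V. \<forall>j\<in>V. E i j \<longrightarrow> m i = 0 \<or> m j = 0)}"

definition hilbert_series_on :: "'a set \<Rightarrow> ('a \<Rightarrow> 'a \<Rightarrow> bool) \<Rightarrow> int fps" where
  "hilbert_series_on V E = Abs_fps (\<lambda>d. int (card (std_monomials_on V E d)))"

lemma hilbert_series_eq_on: "hilbert_series N E = hilbert_series_on {1..N} E"
proof -
  have "standard_monomials N E d = std_monomials_on {1..N} E d" for d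
    unfolding standard_monomials_def std_monomials_on_def by auto
  then show ?thesis
    by (simp add: hilbert_series_def hilbert_series_on_def hilbert_function_def)
qed

lemma finite_std_monomials_on:
  assumes "finite V"
  shows "finite (std_monomials_on V E d)"
proof (rule finite_subset)
  show "std_monomials_on V E d \<subseteq> {m. \<forall>i. (i \<in> V \<longrightarrow> m i \<in> {0..d}) \<and> (i \<notin> V \<longrightarrow> m i = 0)}"
    using member_le_sum[OF _ _ assms] by (fastforce simp: std_monomials_on_def)
  show "finite {m. \<forall>i. (i \<in> V \<longrightarrow> m i \<in> {0..d}) \<and> (i \<notin> V \<longrightarrow> m i = 0)}"
    by (rule finite_set_of_finite_funs) (use assms in auto)
qed

lemma std_monomials_on_restrict:
  assumes "finite V" "U \<subseteq> V"
  shows "{m \<in> std_monomials_on V E d. \<forall>u\<in>V - U. m u = 0} = std_monomials_on U E d"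
proof (intro set_eqI iffI)
  fix m
  assume "m \<in> {m \<in> std_monomials_on V E d. \<forall>u\<in>V - U. m u = 0}"
  then have m: "\<forall>i. i \<notin> V \<longrightarrow> m i = 0" "sum m V = d"
      "\<forall>i\<in>V. \<forall>j\<in>V. E i j \<longrightarrow> m i = 0 \<or> m j = 0" "\<forall>u\<in>V - U. m u = 0"
    by (simp_all add: std_monomials_on_def)
  have "\<forall>i. i \<notin> U \<longrightarrow> m i = 0"
    using m(1,4) by (metis DiffI)
  moreover have "\<forall>i\<in>U. \<forall>j\<in>U. E i j \<longrightarrow> m i = 0 \<or> m j = 0"
    using m(3) assms(2) by (simp add: subset_iff)
  ultimately show "m \<in> std_monomials_on U E d"
    using m(2) sum.mono_neutral_left[OF assms, of m] m(4) unfolding std_monomials_on_def by simp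
next
  fix m
  assume "m \<in> std_monomials_on U E d"
  then have m: "\<forall>i. i \<notin> U \<longrightarrow> m i = 0" "sum m U = d"
      "\<forall>i\<in>U. \<forall>j\<in>U. E i j \<longrightarrow> m i = 0 \<or> m j = 0"
    by (simp_all add: std_monomials_on_def)
  have "\<forall>i. i \<notin> V \<longrightarrow> m i = 0" "\<forall>u\<in>V - U. m u = 0"
    using m(1) assms(2) by auto
  moreover have "\<forall>i\<in>V. \<forall>j\<in>V. E i j \<longrightarrow> m i = 0 \<or> m j = 0"
    using m(1,3) by metis
  ultimately show "m \<in> {m \<in> std_monomials_on V E d. \<forall>u\<in>V - U. m u = 0}"
    using m(2) sum.mono_neutral_left[OF assms, of m] unfolding std_monomials_on_def by simp
qed

lemma std_monomials_on_neighbour_zero: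
  assumes "m \<in> std_monomials_on V E d" "v \<in> V" "0 < m v" "u \<in> V" "E u v \<or> E v u"
  shows "m u = 0"
  using assms unfolding std_monomials_on_def by fastforce

lemma card_std_monomials_on_div_var:
  assumes "finite V" "v \<in> V" "\<not> E v v"
  shows "card {m \<in> std_monomials_on V E (Suc d). 0 < m v} =
         card {m \<in> std_monomials_on V E d. \<forall>u\<in>V. E u v \<or> E v u \<longrightarrow> m u = 0}"
    (is "card ?A = card ?B")
proof (rule bij_betw_same_card[of "\<lambda>m. m(v := m v - 1)"],
       rule bij_betw_byWitness[where f' = "\<lambda>m. m(v := Suc (m v))"])
  have sum_upd: "sum (m(v := y)) V = y + sum m (V - {v})" for m :: "'a \<Rightarrow> nat" and y
    using sum.remove[OF assms(1,2), of "m(v := y)"] by simp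
  have sum_eq: "sum m V = m v + sum m (V - {v})" for m :: "'a \<Rightarrow> nat"
    using sum.remove[OF assms(1,2)] .
  show "(\<lambda>m. m(v := m v - 1)) ` ?A \<subseteq> ?B"
  proof (rule image_subsetI)
    fix m assume "m \<in> ?A"
    then have m: "m \<in> std_monomials_on V E (Suc d)" "0 < m v" by auto
    have nbr: "\<forall>u\<in>V. E u v \<or> E v u \<longrightarrow> m u = 0"
      using std_monomials_on_neighbour_zero[OF m(1) assms(2) m(2)] by blast
    have "sum (m(v := m v - 1)) V = d"
      using m unfolding std_monomials_on_def sum_upd by (simp add: sum_eq)
    with m(1) nbr assms(3) show "m(v := m v - 1) \<in> ?B"
      unfolding std_monomials_on_def by auto
  qed
  show "(\<lambda>m. m(v := Suc (m v))) ` ?B \<subseteq> ?A"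
  proof (rule image_subsetI)
    fix m assume "m \<in> ?B"
    then have m: "m \<in> std_monomials_on V E d" "\<forall>u\<in>V. E u v \<or> E v u \<longrightarrow> m u = 0" by auto
    have "(m(v := Suc (m v))) i = 0 \<or> (m(v := Suc (m v))) j = 0" if "i \<in> V" "j \<in> V" "E i j" for i j
      using m that assms(3) unfolding std_monomials_on_def by (cases "i = v"; cases "j = v") auto
    moreover have "sum (m(v := Suc (m v))) V = Suc d"
      using m unfolding std_monomials_on_def sum_upd by (simp add: sum_eq)
    ultimately show "m(v := Suc (m v)) \<in> ?A"
      using m(1) assms(2) unfolding std_monomials_on_def by auto
  qed
qed auto

lemma hilbert_series_on_vertex_recurrence:
  assumes "finite V" "v \<in> V" "\<not> E v v"
  defines "N \<equiv> insert v {u\<in>V. E u v \<or> E v u}"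
  shows "(1 - fps_X) * hilbert_series_on V E =
         (1 - fps_X) * hilbert_series_on (V - {v}) E + fps_X * hilbert_series_on (V - N) E"
proof -
  let ?S = "std_monomials_on V E"
  define B where "B d = card {m \<in> ?S d. 0 < m v}" for d
  have card_split: "card (?S d) = card {m \<in> ?S d. P m} + card {m \<in> ?S d. \<not> P m}" for d P
    using card_Int_Diff[OF finite_std_monomials_on[OF assms(1)], of E d "Collect P"]
    by (simp add: Int_def set_diff_eq)
  have "{m \<in> ?S d. m v = 0} = std_monomials_on (V - {v}) E d" for d
    using std_monomials_on_restrict[OF assms(1), of "V - {v}"] assms(2) by auto
  then have card_delete: "card (?S d) = card (std_monomials_on (V - {v}) E d) + B d" for d
    using card_split[of d "\<lambda>m. m v = 0"] by (simp add: B_def)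
  have B_0: "B 0 = 0"
    using assms(1,2) by (auto simp: B_def std_monomials_on_def card_eq_0_iff)
  have restrict_N: "{m \<in> ?S d. \<forall>u\<in>N. m u = 0} = std_monomials_on (V - N) E d" for d
    using std_monomials_on_restrict[OF assms(1), of "V - N"] assms(2) by (auto simp: N_def)
  have split_nbrs: "{m \<in> ?S d. \<forall>u\<in>V. E u v \<or> E v u \<longrightarrow> m u = 0} =
      {m \<in> ?S d. 0 < m v} \<union> {m \<in> ?S d. \<forall>u\<in>N. m u = 0}" for d
    using std_monomials_on_neighbour_zero[of _ V E d v] assms(2) by (auto simp: N_def)
  have B_Suc: "B (Suc d) = B d + card (std_monomials_on (V - N) E d)" for d
  proof -
    have "B (Suc d) = card ({m \<in> ?S d. 0 < m v} \<union> {m \<in> ?S d. \<forall>u\<in>N. m u = 0})"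
      unfolding B_def split_nbrs[symmetric] using card_std_monomials_on_div_var[of V v E d, OF assms(1-3)] .
    also have "\<dots> = B d + card {m \<in> ?S d. \<forall>u\<in>N. m u = 0}"
      unfolding B_def
      by (rule card_Un_disjoint) (auto simp: N_def finite_std_monomials_on[OF assms(1)])
    finally show ?thesis
      unfolding restrict_N .
  qed
  define Bf where "Bf = Abs_fps (\<lambda>d. int (B d))"
  have "hilbert_series_on V E = hilbert_series_on (V - {v}) E + Bf"
    by (rule fps_ext) (simp add: hilbert_series_on_def Bf_def card_delete)
  moreover have "Bf = fps_X * Bf + fps_X * hilbert_series_on (V - N) E"
  proof (rule fps_ext)
    fix d show "fps_nth Bf d = fps_nth (fps_X * Bf + fps_X * hilbert_series_on (V - N) E) d"
      by (cases d) (simp_all add: Bf_def B_0 B_Suc hilbert_series_on_def)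
  qed
  ultimately show ?thesis
    by (simp add: algebra_simps)
qed

lemma hilbert_series_on_empty: "hilbert_series_on {} E = 1"
proof (rule fps_ext)
  fix d
  have "std_monomials_on {} E d = (if d = 0 then {\<lambda>_. 0} else {})"
    by (auto simp: std_monomials_on_def)
  then show "fps_nth (hilbert_series_on {} E) d = fps_nth 1 d"
    by (simp add: hilbert_series_on_def)
qed

lemma hilbert_series_path_0: "hilbert_series 0 path_edge = 1"
  by (simp add: hilbert_series_eq_on hilbert_series_on_empty)

(* For k = 0 the truncated k - 1 is right: deleting the closed neighbourhood of the only vertex
   of P_1 leaves the empty graph P_0. *)
lemma hilbert_series_path_Suc:
  "(1 - fps_X) * hilbert_series (Suc k) path_edge =
     (1 - fps_X) * hilbert_series k path_edge + fps_X * hilbert_series (k - 1) path_edge"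
proof -
  have "{1..Suc k} - {Suc k} = {1..k}"
    and "{1..Suc k} - insert (Suc k) {u \<in> {1..Suc k}. path_edge u (Suc k) \<or> path_edge (Suc k) u} = {1..k - 1}"
    by (auto simp: path_edge_def)
  then show ?thesis
    using hilbert_series_on_vertex_recurrence[of "{1..Suc k}" "Suc k" path_edge]
    by (simp add: hilbert_series_eq_on path_edge_def)
qed

(* The Hilbert series recurrence multiplied by (1 - t)^alpha(P_(k+2)), using
   alpha(P_(k+2)) = alpha(P_k) + 1 = alpha(P_(k+1)) + (if odd k then 1 else 0). *)
fun path_h_poly :: "nat \<Rightarrow> int poly" where
  "path_h_poly 0 = 1"
| "path_h_poly (Suc 0) = 1"
| "path_h_poly (Suc (Suc k)) =
     (if even k then 1 else [:1, -1:]) * path_h_poly (Suc k) + [:0, 1:] * path_h_poly k"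

lemma hilbert_series_path_h_poly:
  "hilbert_series n path_edge * (1 - fps_X) ^ ((n + 1) div 2) = fps_of_poly (path_h_poly n)"
proof (induction n rule: path_h_poly.induct)
  case 1
  then show ?case by (simp add: hilbert_series_path_0)
next
  case 2
  then show ?case
    using hilbert_series_path_Suc[of 0] by (simp add: hilbert_series_path_0 algebra_simps)
next
  case (3 k)
  let ?H = "\<lambda>n. hilbert_series n path_edge"
  define a where "a = (k + 1) div 2"
  have "?H (Suc (Suc k)) * (1 - fps_X) ^ ((Suc (Suc k) + 1) div 2) =
      (1 - fps_X) ^ a * ((1 - fps_X) * ?H (Suc (Suc k)))"
    by (simp add: a_def algebra_simps)
  also have "\<dots> = (1 - fps_X) * (?H (Suc k) * (1 - fps_X) ^ a) + fps_X * (?H k * (1 - fps_X) ^ a)"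
    unfolding hilbert_series_path_Suc[of "Suc k", simplified] by (simp add: algebra_simps)
  also have "\<dots> = fps_of_poly (path_h_poly (Suc (Suc k)))"
  proof -
    have IH_k: "?H k * (1 - fps_X) ^ a = fps_of_poly (path_h_poly k)"
      using 3 by (simp add: a_def)
    show ?thesis
    proof (cases "even k")
      case True
      then have "(Suc k + 1) div 2 = Suc a" by (auto simp: a_def)
      then have "(1 - fps_X) * (?H (Suc k) * (1 - fps_X) ^ a) = fps_of_poly (path_h_poly (Suc k))"
        using 3 by (simp add: mult.left_commute)
      with IH_k True show ?thesis
        by (simp add: fps_of_poly_add fps_of_poly_mult fps_of_poly_pCons)
    next
      case False
      then have "(Suc k + 1) div 2 = a" by (auto simp: a_def elim: oddE)
      then have "?H (Suc k) * (1 - fps_X) ^ a = fps_of_poly (path_h_poly (Suc k))"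
        using 3 by simp
      with IH_k False show ?thesis
        by (simp add: fps_of_poly_add fps_of_poly_mult fps_of_poly_pCons)
    qed
  qed
  finally show ?case .
qed

fun path_h_top_coeff :: "nat \<Rightarrow> int" where
  "path_h_top_coeff 0 = 1"
| "path_h_top_coeff (Suc 0) = 0"
| "path_h_top_coeff (Suc (Suc k)) = (- 1) ^ k * path_h_top_coeff (Suc k) + path_h_top_coeff k"

lemma path_h_top_coeff_add_6: "path_h_top_coeff (n + 6) = - path_h_top_coeff n"
proof (induction n rule: path_h_top_coeff.induct)
  case (3 k)
  have "path_h_top_coeff (Suc (Suc k) + 6) = (- 1) ^ (k + 6) * path_h_top_coeff (Suc k + 6) + path_h_top_coeff (k + 6)"
    by (simp only: add_Suc path_h_top_coeff.simps)
  with 3 show ?case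
    by (simp add: power_add)
qed (simp_all add: eval_nat_numeral)

lemma path_h_top_coeff_mod_12: "path_h_top_coeff (n mod 12) = path_h_top_coeff n"
proof -
  have "path_h_top_coeff (r + 12 * q) = path_h_top_coeff r" for r q
  proof (induction q)
    case (Suc q)
    then show ?case
      using path_h_top_coeff_add_6[of "r + 12 * q"] path_h_top_coeff_add_6[of "r + 12 * q + 6"]
      by (simp add: add_ac)
  qed simp
  then show ?thesis
    by (metis mod_mult_div_eq)
qed

lemma path_h_top_coeff_eq_1_iff: "path_h_top_coeff n = 1 \<longleftrightarrow> n mod 12 \<in> {0, 2, 9, 11}"
proof -
  have "\<forall>r\<in>{..<12}. path_h_top_coeff r = 1 \<longleftrightarrow> r \<in> {0, 2, 9, 11}"
    by code_simp
  then have "path_h_top_coeff (n mod 12) = 1 \<longleftrightarrow> n mod 12 \<in> {0, 2, 9, 11}"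
    by simp
  then show ?thesis
    unfolding path_h_top_coeff_mod_12 .
qed

lemma degree_coeff_path_h_poly:
  "degree (path_h_poly n) \<le> (n + 1) div 2 \<and> coeff (path_h_poly n) ((n + 1) div 2) = path_h_top_coeff n"
proof (induction n rule: path_h_poly.induct)
  case (3 k)
  define a where "a = (k + 1) div 2"
  have IH_k: "degree (path_h_poly k) \<le> a" "coeff (path_h_poly k) a = path_h_top_coeff k"
    using 3 by (simp_all add: a_def)
  have deg_X: "degree ([:0, 1:] * path_h_poly k) \<le> Suc a"
    using IH_k(1) by (simp add: degree_pCons_le le_trans)
  show ?case
  proof (cases "even k")
    case True
    then have "(Suc k + 1) div 2 = Suc a" "(Suc (Suc k) + 1) div 2 = Suc a"
      by (auto simp: a_def)
    then have IH_Suc: "degree (path_h_poly (Suc k)) \<le> Suc a"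
        "coeff (path_h_poly (Suc k)) (Suc a) = path_h_top_coeff (Suc k)"
      using 3 by simp_all
    show ?thesis
      using IH_k IH_Suc deg_X True \<open>(Suc (Suc k) + 1) div 2 = Suc a\<close>
      by (simp add: degree_add_le)
  next
    case False
    then have "(Suc k + 1) div 2 = a" "(Suc (Suc k) + 1) div 2 = Suc a"
      by (auto simp: a_def elim: oddE)
    then have IH_Suc: "degree (path_h_poly (Suc k)) \<le> a"
        "coeff (path_h_poly (Suc k)) a = path_h_top_coeff (Suc k)"
      using 3 by simp_all
    have "degree ([:1, -1:] * path_h_poly (Suc k)) \<le> Suc a"
      using IH_Suc(1) degree_mult_le[of "[:1, -1:]" "path_h_poly (Suc k)"] by simp
    moreover have "coeff (path_h_poly (Suc k)) (Suc a) = 0"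
      using IH_Suc(1) by (simp add: coeff_eq_0)
    ultimately show ?thesis
      using IH_k IH_Suc deg_X False \<open>(Suc (Suc k) + 1) div 2 = Suc a\<close>
      by (simp add: degree_add_le)
  qed
qed simp_all

lemma card_independent_set_path_le:
  assumes "independent_set n path_edge F"
  shows "card F \<le> (n + 1) div 2"
proof -
  have F: "F \<subseteq> {1..n}" "\<forall>i\<in>F. \<forall>j\<in>F. \<not> path_edge i j"
    using assms by (auto simp: independent_set_def)
  have "inj_on (\<lambda>i. (i - 1) div 2) F"
  proof (rule inj_onI)
    fix i j assume ij: "i \<in> F" "j \<in> F" and div_eq: "(i - 1) div 2 = (j - 1) div 2"
    have "1 \<le> i" "1 \<le> j"
      using ij F(1) by auto
    with div_eq have "i = j \<or> path_edge i j"
      unfolding path_edge_def by linarith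
    with F(2) ij show "i = j"
      by blast
  qed
  moreover have "(\<lambda>i. (i - 1) div 2) ` F \<subseteq> {..<(n + 1) div 2}"
  proof (rule image_subsetI)
    fix i assume "i \<in> F"
    then have "1 \<le> i" "i \<le> n"
      using F(1) by auto
    then show "(i - 1) div 2 \<in> {..<(n + 1) div 2}"
      unfolding lessThan_iff by linarith
  qed
  ultimately have "card F \<le> card {..<(n + 1) div 2}"
    by (rule card_inj_on_le) simp
  then show ?thesis
    by simp
qed

lemma independence_number_path: "independence_number n path_edge = (n + 1) div 2"
  unfolding independence_number_def
proof (rule Max_eqI)
  show "finite (card ` {F. independent_set n path_edge F})"
    by (rule finite_imageI, rule finite_subset[of _ "Pow {1..n}"]) (auto simp: independent_set_def)
  show "k \<le> (n + 1) div 2" if "k \<in> card ` {F. independent_set n path_edge F}" for k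
    using that card_independent_set_path_le by blast
  let ?odds = "(\<lambda>j. 2 * j + 1) ` {..<(n + 1) div 2}"
  have "2 * j + 1 \<in> {1..n}" if "j < (n + 1) div 2" for j
    using that by auto
  moreover have "\<not> path_edge (2 * i + 1) (2 * j + 1)" for i j :: nat
    unfolding path_edge_def by presburger
  ultimately have "independent_set n path_edge ?odds"
    unfolding independent_set_def by auto
  moreover have "card ?odds = (n + 1) div 2"
    by (simp add: card_image inj_on_def)
  ultimately show "(n + 1) div 2 \<in> card ` {F. independent_set n path_edge F}"
    by (intro image_eqI[of _ card ?odds]) simp_all
qed

lemma lead_coeff_eq_1_and_degree_iff:
  fixes p :: "'a::zero_neq_one poly"
  assumes "degree p \<le> k"
  shows "lead_coeff p = 1 \<and> degree p = k \<longleftrightarrow> coeff p k = 1"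
proof
  assume "coeff p k = 1"
  then have "degree p = k"
    using assms le_degree[of p k] by auto
  with \<open>coeff p k = 1\<close> show "lead_coeff p = 1 \<and> degree p = k"
    by simp
qed auto

theorem theorem2p4:
  fixes n :: nat
  assumes "n \<ge> 1"
  shows "pseudo_gorenstein_star n path_edge \<longleftrightarrow> n mod 12 \<in> {0, 2, 9, 11}"
proof -
  have "is_h_polynomial n path_edge h \<longleftrightarrow> h = path_h_poly n" for h
    unfolding is_h_polynomial_def independence_number_path hilbert_series_path_h_poly
    by (simp add: fps_of_poly_eq_iff)
  moreover have "degree (path_h_poly n) \<le> (n + 1) div 2"
    using degree_coeff_path_h_poly by blast
  ultimately have "pseudo_gorenstein_star n path_edge \<longleftrightarrow> coeff (path_h_poly n) ((n + 1) div 2) = 1"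
    unfolding pseudo_gorenstein_star_def independence_number_path
    using lead_coeff_eq_1_and_degree_iff by simp
  then show ?thesis
    using degree_coeff_path_h_poly path_h_top_coeff_eq_1_iff by simp
qed

end
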